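(* Let $m\ge1$ and let $\Sigma$ be an alphabet with $|\Sigma|=m$. If $m\le 2$, then for every antimorphic involution $\theta$ on $\Sigma^*$ there is no infinite word over $\Sigma$ that is pseudo-cube-free with respect to $\theta$. If $m\ge 3$, then for every antimorphic involution $\theta$ on $\Sigma^*$ there exists an infinite word over $\Sigma$ that is pseudo-cube-free with respect to $\theta$.
   Context: A function $\theta:\Sigma^*\to\Sigma^*$ is an antimorphic involution if $\theta(uv)=\theta(v)\theta(u)$ and $\theta(\theta(w))=w$ for all words $u,v,w$. For an integer $k\ge 2$, a nonempty word $w$ is a pseudo $k$th power with respect to $\theta$ if $w=u_1u_2\cdots u_k$ where for all $1\le i,j\le k$, either $u_i=u_j$ or $u_i=\theta(u_j)$. A pseudo cube is a pseudo $3$rd power. A (finite or infinite) word is pseudo-cube-free with respect to $\theta$ if none of its factors (contiguous subwords) is a pseudo cube with respect to $\theta$. *)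

theory Defs
  imports Main
begin

text \<open>Words over an alphabet S are lists in lists S; infinite words are
functions nat => 'a with range in S.\<close>

definition antimorphic_involution :: "'a set \<Rightarrow> ('a list \<Rightarrow> 'a list) \<Rightarrow> bool" where
  "antimorphic_involution S \<theta> \<longleftrightarrow>
     (\<forall>w\<in>lists S. \<theta> w \<in> lists S) \<and>
     (\<forall>u\<in>lists S. \<forall>v\<in>lists S. \<theta> (u @ v) = \<theta> v @ \<theta> u) \<and>
     (\<forall>w\<in>lists S. \<theta> (\<theta> w) = w)"

definition pseudo_power :: "('a list \<Rightarrow> 'a list) \<Rightarrow> nat \<Rightarrow> 'a list \<Rightarrow> bool" where
  "pseudo_power \<theta> k w \<longleftrightarrow> w \<noteq> [] \<and>
     (\<exists>us. length us = k \<and> w = concat us \<and>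
        (\<forall>i<k. \<forall>j<k. us ! i = us ! j \<or> us ! i = \<theta> (us ! j)))"

abbreviation pseudo_cube :: "('a list \<Rightarrow> 'a list) \<Rightarrow> 'a list \<Rightarrow> bool" where
  "pseudo_cube \<theta> w \<equiv> pseudo_power \<theta> 3 w"

definition inf_factor :: "(nat \<Rightarrow> 'a) \<Rightarrow> 'a list \<Rightarrow> bool" where
  "inf_factor x u \<longleftrightarrow> (\<exists>i n. u = map x [i..<i+n])"

definition pseudo_cube_free_inf :: "('a list \<Rightarrow> 'a list) \<Rightarrow> (nat \<Rightarrow> 'a) \<Rightarrow> bool" where
  "pseudo_cube_free_inf \<theta> x \<longleftrightarrow> (\<forall>u. inf_factor x u \<longrightarrow> \<not> pseudo_cube \<theta> u)"

end

theory Submission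
  imports Defs
begin

text \<open>An antimorphic involution is the reversal of a word composed with an involution of the
letters. Hence a pseudo cube \<open>X Y Z\<close> with \<open>Y, Z \<in> {X, \<theta> X}\<close> is either an ordinary cube \<open>X X X\<close>,
or it contains \<open>X \<theta>(X)\<close> and hence a factor \<open>y \<sigma>(y)\<close> where \<open>\<sigma>\<close> is the letter involution.
Over three letters \<open>a, b, c\<close> with \<open>\<sigma>(c) \<notin> {a, b}\<close>, inserting \<open>c\<close> before every letter of
the Thue--Morse word over \<open>{a, b}\<close> gives a cube-free word without factors \<open>y \<sigma>(y)\<close>.
Over at most two letters, a finite check shows that every word of length 10 contains a
pseudo cube, for both possible letter involutions.\<close>

section \<open>Antimorphic involutions act letterwise\<close>

definition letter_involution :: "('a list \<Rightarrow> 'a list) \<Rightarrow> 'a \<Rightarrow> 'a" where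
  "letter_involution \<theta> y = hd (\<theta> [y])"

context
  fixes S :: "'a set" and \<theta> :: "'a list \<Rightarrow> 'a list"
  assumes \<theta>: "antimorphic_involution S \<theta>"
begin

lemma antimorphic_involution_lists: "w \<in> lists S \<Longrightarrow> \<theta> w \<in> lists S"
  and antimorphic_involution_append:
    "u \<in> lists S \<Longrightarrow> v \<in> lists S \<Longrightarrow> \<theta> (u @ v) = \<theta> v @ \<theta> u"
  and antimorphic_involution_involutive: "w \<in> lists S \<Longrightarrow> \<theta> (\<theta> w) = w"
  using \<theta> unfolding antimorphic_involution_def by auto

lemma antimorphic_involution_Nil: "\<theta> [] = []"
proof -
  have "\<theta> [] = \<theta> [] @ \<theta> []"
    using antimorphic_involution_append[of "[]" "[]"] by simp
  then show ?thesis
    by (metis self_append_conv2)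
qed

lemma length_le_antimorphic_involution: "w \<in> lists S \<Longrightarrow> length w \<le> length (\<theta> w)"
proof (induction w rule: lists.induct)
  case Nil
  then show ?case by simp
next
  case (Cons y w)
  have "0 < length (\<theta> [y])"
    using antimorphic_involution_involutive[of "[y]"] antimorphic_involution_Nil Cons by auto
  moreover have "length (\<theta> (y # w)) = length (\<theta> w) + length (\<theta> [y])"
    using antimorphic_involution_append[of "[y]" w] Cons by simp
  ultimately show ?case
    using Cons.IH unfolding length_Cons by linarith
qed

lemma length_antimorphic_involution: "w \<in> lists S \<Longrightarrow> length (\<theta> w) = length w"
  using length_le_antimorphic_involution[of w] length_le_antimorphic_involution[of "\<theta> w"]
    antimorphic_involution_lists antimorphic_involution_involutive
  by (simp add: antisym)

lemma antimorphic_involution_singleton: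
  assumes "y \<in> S"
  shows "\<theta> [y] = [letter_involution \<theta> y]" and "letter_involution \<theta> y \<in> S"
proof -
  have "length (\<theta> [y]) = 1"
    using length_antimorphic_involution[of "[y]"] assms by simp
  then obtain z where z: "\<theta> [y] = [z]"
    by (auto simp: length_Suc_conv)
  then show "\<theta> [y] = [letter_involution \<theta> y]"
    unfolding letter_involution_def by simp
  show "letter_involution \<theta> y \<in> S"
    using antimorphic_involution_lists[of "[y]"] assms z unfolding letter_involution_def by simp
qed

lemma antimorphic_involution_eq_rev_map:
  "w \<in> lists S \<Longrightarrow> \<theta> w = rev (map (letter_involution \<theta>) w)"
proof (induction w rule: lists.induct)
  case Nil
  then show ?case using antimorphic_involution_Nil by simp
next
  case (Cons y w)
  then have "\<theta> (y # w) = \<theta> w @ \<theta> [y]"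
    using antimorphic_involution_append[of "[y]" w] by simp
  then show ?case
    using Cons antimorphic_involution_singleton(1) by simp
qed

lemma letter_involution_involutive:
  "y \<in> S \<Longrightarrow> letter_involution \<theta> (letter_involution \<theta> y) = y"
  using antimorphic_involution_involutive[of "[y]"]
    antimorphic_involution_singleton[of y] antimorphic_involution_singleton[of "letter_involution \<theta> y"]
  by simp

lemma append_antimorphic_involution_has_pair:
  assumes "X \<in> lists S" and "X \<noteq> []"
  shows "\<exists>p s. X @ \<theta> X = p @ [last X, letter_involution \<theta> (last X)] @ s"
proof -
  have X: "X = butlast X @ [last X]"
    using assms(2) by simp
  have "\<theta> X = letter_involution \<theta> (last X) # rev (map (letter_involution \<theta>) (butlast X))"
    using antimorphic_involution_eq_rev_map[OF assms(1)] by (subst (asm) X) simp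
  then have "X @ \<theta> X = butlast X @ [last X, letter_involution \<theta> (last X)]
      @ rev (map (letter_involution \<theta>) (butlast X))"
    by (subst (1) X) simp
  then show ?thesis by blast
qed

lemma pseudo_cube_cases:
  assumes "u \<in> lists S" and "pseudo_cube \<theta> u"
  shows "(\<exists>X. X \<noteq> [] \<and> u = X @ X @ X) \<or> (\<exists>p s y. u = p @ [y, letter_involution \<theta> y] @ s)"
proof -
  obtain us where us: "length us = 3" "u = concat us"
      "\<forall>i<3. \<forall>j<3. us ! i = us ! j \<or> us ! i = \<theta> (us ! j)" and "u \<noteq> []"
    using assms(2) unfolding pseudo_power_def by blast
  obtain X Y Z where XYZ: "us = [X, Y, Z]"
    using us(1) by (auto simp: numeral_3_eq_3 length_Suc_conv)
  have u: "u = X @ Y @ Z" and Y: "Y = X \<or> Y = \<theta> X" and Z: "Z = X \<or> Z = \<theta> X"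
    using us(2) us(3)[rule_format, of 1 0] us(3)[rule_format, of 2 0] XYZ by simp_all
  have X: "X \<in> lists S"
    using assms(1) u by simp
  have "X \<noteq> []"
    using \<open>u \<noteq> []\<close> u Y Z antimorphic_involution_Nil by auto
  then obtain p s where pair: "X @ \<theta> X = p @ [last X, letter_involution \<theta> (last X)] @ s"
    using append_antimorphic_involution_has_pair[OF X] by blast
  consider "Y = X" "Z = X" | "Y = X" "Z = \<theta> X" | "Y = \<theta> X"
    using Y Z by blast
  then show ?thesis
  proof cases
    case 1
    then show ?thesis using u \<open>X \<noteq> []\<close> by blast
  next
    case 2
    then have "u = (X @ p) @ [last X, letter_involution \<theta> (last X)] @ s"
      using u pair by simp
    then show ?thesis by blast
  next
    case 3
    then have "u = p @ [last X, letter_involution \<theta> (last X)] @ (s @ Z)"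
      using u pair by simp
    then show ?thesis by blast
  qed
qed

end

definition cube_free :: "(nat \<Rightarrow> 'a) \<Rightarrow> bool" where
  "cube_free x \<longleftrightarrow> (\<forall>i p. 0 < p \<longrightarrow> (\<exists>k<2 * p. x (i + k) \<noteq> x (i + k + p)))"

lemma pseudo_cube_free_inf_if_cube_free:
  assumes \<theta>: "antimorphic_involution S \<theta>" and "range x \<subseteq> S" and "cube_free x"
    and no_pair: "\<And>j. x (Suc j) \<noteq> letter_involution \<theta> (x j)"
  shows "pseudo_cube_free_inf \<theta> x"
  unfolding pseudo_cube_free_inf_def inf_factor_def
proof (intro allI impI notI)
  fix u assume "\<exists>i n. u = map x [i..<i + n]"
  then obtain i n where u: "u = map x [i..<i + n]" by blast
  then have nth_u: "\<And>k. k < length u \<Longrightarrow> u ! k = x (i + k)"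
    by simp
  assume pseudo_cube: "pseudo_cube \<theta> u"
  have "u \<in> lists S"
    using assms(2) u by (auto simp: image_subset_iff)
  then consider X where "X \<noteq> []" "u = X @ X @ X"
    | p s y where "u = p @ [y, letter_involution \<theta> y] @ s"
    using pseudo_cube_cases[OF \<theta> _ pseudo_cube] by blast
  then show False
  proof cases
    case (1 X)
    define q where "q = length X"
    have "0 < q"
      using \<open>X \<noteq> []\<close> unfolding q_def by simp
    then obtain k where k: "k < 2 * q" "x (i + k) \<noteq> x (i + k + q)"
      using \<open>cube_free x\<close> unfolding cube_free_def by blast
    have "u ! (q + k) = (X @ X) ! k"
      using 1(2) unfolding q_def by (simp add: nth_append_length_plus)
    also have "\<dots> = u ! k"
      using 1(2) k(1) unfolding q_def by (simp add: nth_append)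
    finally show False
      using k 1(2) nth_u[of k] nth_u[of "q + k"] unfolding q_def by (simp add: add_ac)
  next
    case (2 p s y)
    then have "x (i + length p) = y" "x (Suc (i + length p)) = letter_involution \<theta> y"
      using nth_u[of "length p"] nth_u[of "Suc (length p)"] by (simp_all add: nth_append)
    then show False
      using no_pair[of "i + length p"] by simp
  qed
qed

section \<open>The Thue--Morse word\<close>

function thue_morse :: "nat \<Rightarrow> bool" where
  "thue_morse n = (if n = 0 then False else thue_morse (n div 2) \<noteq> odd n)"
  by auto
termination by (relation "measure id") auto

declare thue_morse.simps [simp del]

lemma thue_morse_div2: "thue_morse n = (thue_morse (n div 2) \<noteq> odd n)"
  by (cases "n = 0") (simp_all add: thue_morse.simps[of n] thue_morse.simps[of 0])

lemma thue_morse_Suc_even: "even j \<Longrightarrow> thue_morse (Suc j) \<noteq> thue_morse j"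
  using thue_morse_div2[of j] thue_morse_div2[of "Suc j"] by simp

lemma thue_morse_no_odd_period:
  assumes "odd p" and period: "\<forall>k<2 * p. thue_morse (i + k) = thue_morse (i + k + p)"
  shows False
proof -
  have p: "0 < p"
    using assms(1) by (rule odd_pos)
  text \<open>The period moves every odd position of the window onto an even one, so the window
    alternates.\<close>
  have alternate: "thue_morse (Suc j) \<noteq> thue_morse j" if "i \<le> j" "Suc j < i + 3 * p" for j
  proof (cases "even j")
    case True
    then show ?thesis by (rule thue_morse_Suc_even)
  next
    case False
    show ?thesis
    proof (cases "Suc j < i + 2 * p")
      case True
      then have "thue_morse j = thue_morse (j + p)" "thue_morse (Suc j) = thue_morse (Suc j + p)"
        using period[rule_format, of "j - i"] period[rule_format, of "Suc j - i"] that by simp_all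
      moreover have "even (j + p)"
        using \<open>odd j\<close> \<open>odd p\<close> by simp
      ultimately show ?thesis
        using thue_morse_Suc_even[of "j + p"] by simp
    next
      case False
      then have "i + p \<le> j"
        using p by simp
      then have "thue_morse (j - p) = thue_morse j" "thue_morse (Suc (j - p)) = thue_morse (Suc j)"
        using period[rule_format, of "j - p - i"] period[rule_format, of "Suc (j - p) - i"] that
        by (simp_all add: Suc_diff_le)
      moreover have "even (j - p)"
        using \<open>odd j\<close> \<open>odd p\<close> \<open>i + p \<le> j\<close> by simp
      ultimately show ?thesis
        using thue_morse_Suc_even[of "j - p"] by simp
    qed
  qed
  have "d \<le> p \<Longrightarrow> thue_morse (i + d) = (thue_morse i \<noteq> odd d)" for d
  proof (induction d)
    case (Suc d)
    then show ?case
      using alternate[of "i + d"] p by auto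
  qed simp
  then show False
    using period[rule_format, of 0] p \<open>odd p\<close> by simp
qed

lemma thue_morse_halve_period:
  assumes "\<forall>k<2 * (2 * q). thue_morse (i + k) = thue_morse (i + k + 2 * q)"
  shows "\<forall>k<2 * q. thue_morse (i div 2 + k) = thue_morse (i div 2 + k + q)"
proof (intro allI impI)
  fix k assume "k < 2 * q"
  then have "thue_morse (i + 2 * k) = thue_morse (i + 2 * k + 2 * q)"
    using assms by simp
  moreover have "(i + 2 * k) div 2 = i div 2 + k" "(i + 2 * k + 2 * q) div 2 = i div 2 + k + q"
      "odd (i + 2 * k + 2 * q) = odd (i + 2 * k)"
    by simp_all
  ultimately show "thue_morse (i div 2 + k) = thue_morse (i div 2 + k + q)"
    using thue_morse_div2[of "i + 2 * k"] thue_morse_div2[of "i + 2 * k + 2 * q"] by metis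
qed

theorem cube_free_thue_morse: "cube_free thue_morse"
  unfolding cube_free_def
proof (intro allI impI)
  fix i p :: nat
  show "0 < p \<Longrightarrow> \<exists>k<2 * p. thue_morse (i + k) \<noteq> thue_morse (i + k + p)"
  proof (induction p arbitrary: i rule: less_induct)
    case (less p)
    show ?case
    proof (rule ccontr)
      assume "\<not> ?case"
      then have period: "\<forall>k<2 * p. thue_morse (i + k) = thue_morse (i + k + p)"
        by blast
      show False
      proof (cases "even p")
        case True
        then obtain q where q: "p = 2 * q" by blast
        then have "\<forall>k<2 * q. thue_morse (i div 2 + k) = thue_morse (i div 2 + k + q)"
          using thue_morse_halve_period[where i = i and q = q] period by simp
        moreover have "\<exists>k<2 * q. thue_morse (i div 2 + k) \<noteq> thue_morse (i div 2 + k + q)"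
          using less.IH[of q "i div 2"] less.prems q by simp
        ultimately show False by blast
      qed (use thue_morse_no_odd_period period in blast)
    qed
  qed
qed

lemma cube_free_comp: "cube_free x \<Longrightarrow> inj f \<Longrightarrow> cube_free (f \<circ> x)"
  unfolding cube_free_def by (simp add: inj_eq)

definition interleave :: "'a \<Rightarrow> (nat \<Rightarrow> 'a) \<Rightarrow> nat \<Rightarrow> 'a" where
  "interleave c y n = (if even n then c else y (n div 2))"

lemma cube_free_interleave:
  assumes "cube_free y" and "c \<notin> range y"
  shows "cube_free (interleave c y)"
  unfolding cube_free_def
proof (intro allI impI)
  fix i p :: nat assume "0 < p"
  show "\<exists>k<2 * p. interleave c y (i + k) \<noteq> interleave c y (i + k + p)"
  proof (cases "even p")
    case False
    then have "interleave c y i \<noteq> interleave c y (i + p)"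
      using assms(2) by (cases "even i") (auto simp: interleave_def)
    then show ?thesis
      using \<open>0 < p\<close> by (intro exI[of _ 0]) simp
  next
    case True
    then obtain q where q: "p = 2 * q" by blast
    obtain k where k: "k < 2 * q" "y (i div 2 + k) \<noteq> y (i div 2 + k + q)"
      using assms(1) \<open>0 < p\<close> q unfolding cube_free_def by auto
    text \<open>Compare the odd positions \<open>2 (i div 2 + k) + 1\<close> and \<open>2 (i div 2 + k + q) + 1\<close>.\<close>
    define d where "d = 2 * (i div 2 + k) + 1 - i"
    have "i + d = 2 * (i div 2 + k) + 1" "d < 2 * p"
      using k(1) q unfolding d_def by auto
    then have "interleave c y (i + d) \<noteq> interleave c y (i + d + p)"
      using k(2) q by (simp add: interleave_def)
    then show ?thesis
      using \<open>d < 2 * p\<close> by blast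
  qed
qed

section \<open>Alphabets with at least three letters\<close>

lemma ex_pseudo_cube_free_three_letters:
  assumes \<theta>: "antimorphic_involution S \<theta>"
    and S: "a \<in> S" "b \<in> S" "c \<in> S" and distinct: "a \<noteq> b" "a \<noteq> c" "b \<noteq> c"
    and \<sigma>c: "letter_involution \<theta> c \<noteq> a" "letter_involution \<theta> c \<noteq> b"
  shows "\<exists>x. range x \<subseteq> S \<and> pseudo_cube_free_inf \<theta> x"
proof -
  define y where "y = (\<lambda>v. if v then a else b) \<circ> thue_morse"
  define x where "x = interleave c y"
  have y: "y k = a \<or> y k = b" for k
    unfolding y_def by simp
  have "inj (\<lambda>v. if v then a else b)"
    using distinct(1) by (simp add: inj_def)
  then have "cube_free y"
    unfolding y_def by (rule cube_free_comp[OF cube_free_thue_morse])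
  then have "cube_free x"
    unfolding x_def by (rule cube_free_interleave) (use y distinct in force)
  have "x k \<in> S" for k
    using S y[of "k div 2"] unfolding x_def interleave_def by auto
  then have "range x \<subseteq> S"
    by auto
  have \<sigma>ab: "letter_involution \<theta> a \<noteq> c" "letter_involution \<theta> b \<noteq> c"
    using letter_involution_involutive[OF \<theta> S(1)] letter_involution_involutive[OF \<theta> S(2)] \<sigma>c
    by auto
  have "x (Suc j) \<noteq> letter_involution \<theta> (x j)" for j
    using y[of "j div 2"] y[of "Suc j div 2"] \<sigma>c \<sigma>ab
    unfolding x_def interleave_def by auto
  then have "pseudo_cube_free_inf \<theta> x"
    using pseudo_cube_free_inf_if_cube_free[OF \<theta> \<open>range x \<subseteq> S\<close> \<open>cube_free x\<close>] by blast
  with \<open>range x \<subseteq> S\<close> show ?thesis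
    by blast
qed

lemma ex_in_diff_doubleton:
  assumes "finite S" and "card S \<ge> 3"
  obtains e where "e \<in> S" "e \<noteq> u" "e \<noteq> v"
proof -
  have "card {u, v} \<le> 2"
    by (cases "u = v") simp_all
  then have "card {u, v} < card S"
    using assms(2) by linarith
  then have "\<not> S \<subseteq> {u, v}"
    using card_mono[of "{u, v}" S] by auto
  then show ?thesis
    using that by blast
qed

text \<open>Take a fixed point \<open>c\<close> of \<open>\<sigma>\<close> with any two other letters; otherwise take an orbit
  \<open>{c, \<sigma>(c)}\<close> and a third letter \<open>e\<close>: as the orbit of \<open>e\<close> is disjoint from \<open>{c, \<sigma>(c)}\<close>, one of
  \<open>(c, \<sigma>(c), e)\<close> and \<open>(e, \<sigma>(e), c)\<close> works.\<close>
lemma three_letters_avoiding_involution: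
  assumes \<theta>: "antimorphic_involution S \<theta>" and "finite S" and "card S \<ge> 3"
  obtains a b c where "a \<in> S" "b \<in> S" "c \<in> S" "a \<noteq> b" "a \<noteq> c" "b \<noteq> c"
    "letter_involution \<theta> c \<noteq> a" "letter_involution \<theta> c \<noteq> b"
proof -
  let ?\<sigma> = "letter_involution \<theta>"
  obtain c where c: "c \<in> S"
    using ex_in_diff_doubleton[OF assms(2,3)] by blast
  show thesis
  proof (cases "?\<sigma> c = c")
    case True
    obtain a where "a \<in> S" "a \<noteq> c"
      using ex_in_diff_doubleton[OF assms(2,3), where u = c and v = c] by blast
    moreover obtain b where "b \<in> S" "b \<noteq> c" "b \<noteq> a"
      using ex_in_diff_doubleton[OF assms(2,3), where u = c and v = a] by blast
    ultimately show thesis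
      using c True by (intro that[of a b c]) auto
  next
    case \<sigma>c: False
    obtain e where e: "e \<in> S" "e \<noteq> c" "e \<noteq> ?\<sigma> c"
      using ex_in_diff_doubleton[OF assms(2,3), where u = c and v = "?\<sigma> c"] by blast
    have \<sigma>S: "?\<sigma> c \<in> S" "?\<sigma> e \<in> S"
      using antimorphic_involution_singleton(2)[OF \<theta>] c e(1) by blast+
    show thesis
    proof (cases "?\<sigma> e = e")
      case True
      then show thesis
        using c e \<sigma>S \<sigma>c by (intro that[of c "?\<sigma> c" e]) auto
    next
      case False
      have "?\<sigma> e \<noteq> c" "?\<sigma> e \<noteq> ?\<sigma> c"
        using letter_involution_involutive[OF \<theta> c] letter_involution_involutive[OF \<theta> e(1)] e
        by auto
      then show thesis
        using c e \<sigma>S False by (intro that[of e "?\<sigma> e" c]) auto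
    qed
  qed
qed

section \<open>Alphabets with at most two letters\<close>

text \<open>As \<open>\<theta>\<close> preserves length, a pseudo cube is split into equal thirds; only the soundness
  of this executable test is needed.\<close>
definition pseudo_cube_by_thirds :: "('b list \<Rightarrow> 'b list) \<Rightarrow> 'b list \<Rightarrow> bool" where
  "pseudo_cube_by_thirds \<theta> w \<longleftrightarrow> w \<noteq> [] \<and> length w mod 3 = 0 \<and>
     (let p = length w div 3; X = take p w; Y = take p (drop p w); Z = drop (2 * p) w
      in (Y = X \<or> Y = \<theta> X) \<and> (Z = X \<or> Z = \<theta> X))"

definition has_pseudo_cube_factor :: "('b list \<Rightarrow> 'b list) \<Rightarrow> 'b list \<Rightarrow> bool" where
  "has_pseudo_cube_factor \<theta> w \<longleftrightarrow>
     (\<exists>i\<in>set [0..<length w]. \<exists>n\<in>set [1..<length w - i + 1].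
        pseudo_cube_by_thirds \<theta> (take n (drop i w)))"

lemma binary_words_have_pseudo_cube_factor_rev:
  "\<forall>w\<in>set (List.n_lists 10 [True, False]). has_pseudo_cube_factor rev w"
  by code_simp

lemma binary_words_have_pseudo_cube_factor_rev_Not:
  "\<forall>w\<in>set (List.n_lists 10 [True, False]). has_pseudo_cube_factor (\<lambda>v. rev (map Not v)) w"
  by code_simp

lemma pseudo_cube_if_pseudo_cube_by_thirds:
  assumes "pseudo_cube_by_thirds \<theta> w" and involutive: "\<And>v. \<theta> (\<theta> v) = v"
  shows "pseudo_cube \<theta> w"
proof -
  define p where "p = length w div 3"
  define X where "X = take p w"
  define Y where "Y = take p (drop p w)"
  define Z where "Z = drop (2 * p) w"
  have "w \<noteq> []" and YZ: "Y = X \<or> Y = \<theta> X" "Z = X \<or> Z = \<theta> X"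
    using assms(1) unfolding pseudo_cube_by_thirds_def Let_def p_def X_def Y_def Z_def by auto
  have "w = X @ Y @ Z"
    unfolding X_def Y_def Z_def
    by (metis append_take_drop_id drop_drop mult_2)
  moreover have "\<forall>i<3. \<forall>j<3. [X, Y, Z] ! i = [X, Y, Z] ! j \<or> [X, Y, Z] ! i = \<theta> ([X, Y, Z] ! j)"
    using YZ involutive by (auto simp: numeral_3_eq_3 less_Suc_eq nth_Cons')
  ultimately show ?thesis
    unfolding pseudo_power_def using \<open>w \<noteq> []\<close> by (intro conjI exI[of _ "[X, Y, Z]"]) simp_all
qed

lemma pseudo_power_map:
  assumes "pseudo_power \<theta>' k v" and commute: "\<And>v. \<theta> (map g v) = map g (\<theta>' v)"
  shows "pseudo_power \<theta> k (map g v)"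
proof -
  obtain us where us: "length us = k" "v = concat us"
      "\<forall>i<k. \<forall>j<k. us ! i = us ! j \<or> us ! i = \<theta>' (us ! j)" and "v \<noteq> []"
    using assms(1) unfolding pseudo_power_def by blast
  have "\<forall>i<k. \<forall>j<k. map (map g) us ! i = map (map g) us ! j \<or>
      map (map g) us ! i = \<theta> (map (map g) us ! j)"
  proof (intro allI impI)
    fix i j assume "i < k" "j < k"
    then have "us ! i = us ! j \<or> us ! i = \<theta>' (us ! j)"
      using us(3) by blast
    then show "map (map g) us ! i = map (map g) us ! j \<or>
        map (map g) us ! i = \<theta> (map (map g) us ! j)"
      using \<open>i < k\<close> \<open>j < k\<close> us(1) commute by auto
  qed
  then show ?thesis
    unfolding pseudo_power_def using us(1,2) \<open>v \<noteq> []\<close>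
    by (intro conjI exI[of _ "map (map g) us"]) (simp_all add: map_concat)
qed

lemma not_pseudo_cube_free_if_prefix_has_factor:
  assumes "has_pseudo_cube_factor \<theta>' bs" and "\<And>v. \<theta>' (\<theta>' v) = v"
    and "\<And>v. \<theta> (map g v) = map g (\<theta>' v)" and prefix: "map g bs = map x [0..<length bs]"
  shows "\<not> pseudo_cube_free_inf \<theta> x"
proof -
  obtain i n where "i \<in> set [0..<length bs]" "n \<in> set [1..<length bs - i + 1]"
      and thirds: "pseudo_cube_by_thirds \<theta>' (take n (drop i bs))"
    using assms(1) unfolding has_pseudo_cube_factor_def by blast
  then have i: "i < length bs" "n \<le> length bs - i"
    by auto
  have "pseudo_cube \<theta> (map g (take n (drop i bs)))"
    using pseudo_power_map pseudo_cube_if_pseudo_cube_by_thirds[OF thirds] assms(2,3) by blast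
  moreover have "take n (drop i [0..<length bs]) = [i..<i + n]"
    using i by (simp add: take_upt)
  then have "map g (take n (drop i bs)) = map x [i..<i + n]"
    using prefix by (metis drop_map take_map)
  ultimately show ?thesis
    unfolding pseudo_cube_free_inf_def inf_factor_def by blast
qed

lemma not_pseudo_cube_free_two_letters:
  assumes \<theta>: "antimorphic_involution S \<theta>" and S: "S = {a, b}" and "range x \<subseteq> S"
  shows "\<not> pseudo_cube_free_inf \<theta> x"
proof -
  let ?\<sigma> = "letter_involution \<theta>"
  define g where "g v = (if v then a else b)" for v
  define f where "f = (if ?\<sigma> a = a then id else Not)"
  have \<sigma>S: "?\<sigma> a \<in> {a, b}" "?\<sigma> b \<in> {a, b}"
    using antimorphic_involution_singleton(2)[OF \<theta>] S by blast+
  have \<sigma>\<sigma>: "?\<sigma> (?\<sigma> a) = a" "?\<sigma> (?\<sigma> b) = b"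
    using letter_involution_involutive[OF \<theta>] S by blast+
  have "?\<sigma> (g v) = g (f v)" for v
    using \<sigma>S \<sigma>\<sigma> unfolding f_def g_def by (cases v) auto
  moreover have "map g v \<in> lists S" for v
    using S unfolding g_def by auto
  ultimately have commute: "\<theta> (map g v) = map g (rev (map f v))" for v
    using antimorphic_involution_eq_rev_map[OF \<theta>] by (simp add: rev_map)
  have involutive: "rev (map f (rev (map f v))) = v" for v
    unfolding f_def by (simp add: rev_map comp_def)
  define bs where "bs = map (\<lambda>k. x k = a) [0..<10]"
  have prefix: "map g bs = map x [0..<length bs]"
    using assms(3) S unfolding bs_def g_def by auto
  have "has_pseudo_cube_factor (\<lambda>v. rev (map f v)) bs"
  proof -
    have bs: "bs \<in> set (List.n_lists 10 [True, False])"
      unfolding bs_def by (auto simp: set_n_lists)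
    show ?thesis
      using bspec[OF binary_words_have_pseudo_cube_factor_rev bs]
        bspec[OF binary_words_have_pseudo_cube_factor_rev_Not bs]
      by (simp add: f_def)
  qed
  then show ?thesis
    by (rule not_pseudo_cube_free_if_prefix_has_factor[OF _ involutive commute prefix])
qed

theorem mainTheorem2:
  fixes S :: "'a set" and m :: nat
  assumes "finite S" and "card S = m" and "m \<ge> 1"
  shows "(m \<le> 2 \<longrightarrow> (\<forall>\<theta>. antimorphic_involution S \<theta> \<longrightarrow>
            \<not> (\<exists>x::nat \<Rightarrow> 'a. range x \<subseteq> S \<and> pseudo_cube_free_inf \<theta> x))) \<and>
         (m \<ge> 3 \<longrightarrow> (\<forall>\<theta>. antimorphic_involution S \<theta> \<longrightarrow>
            (\<exists>x::nat \<Rightarrow> 'a. range x \<subseteq> S \<and> pseudo_cube_free_inf \<theta> x)))"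
proof (intro conjI impI allI)
  fix \<theta> assume "m \<le> 2" and \<theta>: "antimorphic_involution S \<theta>"
  then have "card S = 1 \<or> card S = 2"
    using assms by linarith
  then obtain a b where "S = {a, b}"
  proof (elim disjE)
    assume "card S = 1"
    then obtain a where "S = {a}"
      by (rule card_1_singletonE)
    then show thesis
      using that[of a a] by simp
  next
    assume "card S = 2"
    then show thesis
      using that by (auto simp: card_2_iff)
  qed
  then show "\<not> (\<exists>x. range x \<subseteq> S \<and> pseudo_cube_free_inf \<theta> x)"
    using not_pseudo_cube_free_two_letters[OF \<theta>] by blast
next
  fix \<theta> assume "m \<ge> 3" and \<theta>: "antimorphic_involution S \<theta>"
  then obtain a b c where "a \<in> S" "b \<in> S" "c \<in> S" "a \<noteq> b" "a \<noteq> c" "b \<noteq> c"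
      "letter_involution \<theta> c \<noteq> a" "letter_involution \<theta> c \<noteq> b"
    using three_letters_avoiding_involution[OF \<theta> assms(1)] assms(2) by blast
  then show "\<exists>x. range x \<subseteq> S \<and> pseudo_cube_free_inf \<theta> x"
    using ex_pseudo_cube_free_three_letters[OF \<theta>] by blast
qed

end
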